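(* Let $\Sigma\subset\mathbb S_d^+$ be bounded, closed and convex and $\mathbf W=(W_1,\dots,W_d)\sim\hat N(\mathbf0,\Sigma)$. For $A\in\Sigma$ write $A_{ij}$ for its $(i,j)$ entry and set $\underline\Sigma_{ij}=\min_{A\in\Sigma}A_{ij}$, $\overline\Sigma_{ij}=\max_{A\in\Sigma}A_{ij}$. Then for all $i,j\in\{1,\dots,d\}$, $$\hat{\mathbb E}[W_iW_j]=\overline\Sigma_{ij},\qquad -\hat{\mathbb E}[-W_iW_j]=\underline\Sigma_{ij};$$ in particular $\hat{\mathbb E}[W_i^2]=\overline\Sigma_{ii}$ and $-\hat{\mathbb E}[-W_i^2]=\underline\Sigma_{ii}$.
   Context: Sublinear expectation space $(\Omega,\mathcal H,\hat{\mathbb E})$, $\hat{\mathbb E}[X]=\sup_{Q\in\mathcal P}E_Q[X]$. $C_{b,Lip}$: bounded Lipschitz; $C_{l.Lip}(\mathbb R^m)$: $|\varphi(x)-\varphi(y)|\le C(1+|x|^k+|y|^k)|x-y|$. $X\dashrightarrow Y$ means $\hat{\mathbb E}[\varphi(X,Y)]=\hat{\mathbb E}[\hat{\mathbb E}[\varphi(x,Y)]_{x=X}]$ for all $\varphi\in C_{b,Lip}$. $\mathbb S_d^+$: symmetric positive semidefinite $d\times d$ matrices; $\Sigma^{1/2}=\{A^{1/2}:A\in\Sigma\}$ (symmetric square roots). Multivariate semi-$G$-normal $\mathbf W\sim\hat N(\mathbf0,\Sigma)$: $\mathbf W=\mathbf V\boldsymbol\epsilon$, where $\mathbf V$ is a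 random $d\times d$ matrix with $\hat{\mathbb E}[\varphi(\mathbf V)]=\max_{B\in\Sigma^{1/2}}\varphi(B)$ for all $\varphi\in C_{l.Lip}(\mathbb R^{d\times d})$, $\boldsymbol\epsilon$ is a $d$-vector with $\hat{\mathbb E}[\varphi(\boldsymbol\epsilon)]=E[\varphi(Z)]$ for classical $Z\sim N(\mathbf0,I_d)$, and $\mathbf V\dashrightarrow\boldsymbol\epsilon$. *)

theory Defs
  imports "HOL-Analysis.Analysis" "HOL-Probability.Probability"
begin

definition sublinear_expectation :: "('w \<Rightarrow> real) set \<Rightarrow> (('w \<Rightarrow> real) \<Rightarrow> real) \<Rightarrow> bool" where
  "sublinear_expectation H E \<longleftrightarrow>
     (\<forall>c. (\<lambda>_. c) \<in> H) \<and>
     (\<forall>X\<in>H. \<forall>Y\<in>H. (\<lambda>w. X w + Y w) \<in> H) \<and>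
     (\<forall>X\<in>H. \<forall>a. (\<lambda>w. a * X w) \<in> H) \<and>
     (\<forall>X\<in>H. (\<lambda>w. \<bar>X w\<bar>) \<in> H) \<and>
     (\<forall>X\<in>H. \<forall>Y\<in>H. (\<forall>w. X w \<ge> Y w) \<longrightarrow> E X \<ge> E Y) \<and>
     (\<forall>c. E (\<lambda>_. c) = c) \<and>
     (\<forall>X\<in>H. \<forall>Y\<in>H. E (\<lambda>w. X w + Y w) \<le> E X + E Y) \<and>
     (\<forall>X\<in>H. \<forall>a\<ge>0. E (\<lambda>w. a * X w) = a * E X)"

definition random_vector :: "('w \<Rightarrow> real) set \<Rightarrow> ('w \<Rightarrow> 'a::euclidean_space) \<Rightarrow> bool" where
  "random_vector H X \<longleftrightarrow> (\<forall>b\<in>Basis. (\<lambda>w. X w \<bullet> b) \<in> H)"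

definition C_lLip :: "('a::euclidean_space \<Rightarrow> real) \<Rightarrow> bool" where
  "C_lLip \<phi> \<longleftrightarrow> (\<exists>C k::nat. \<forall>x y.
      \<bar>\<phi> x - \<phi> y\<bar> \<le> C * (1 + norm x ^ k + norm y ^ k) * norm (x - y))"

definition C_bLip :: "('a::euclidean_space \<Rightarrow> real) \<Rightarrow> bool" where
  "C_bLip \<phi> \<longleftrightarrow> (\<exists>M. \<forall>x. \<bar>\<phi> x\<bar> \<le> M) \<and> (\<exists>L. \<forall>x y. \<bar>\<phi> x - \<phi> y\<bar> \<le> L * norm (x - y))"

text \<open>Closure of H under C_lLip transformations of random vectors with values in
the euclidean space 'a (Peng's standing requirement on H, stated per value type).\<close>
definition lLip_closed :: "('w \<Rightarrow> real) set \<Rightarrow> 'a::euclidean_space itself \<Rightarrow> bool" where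
  "lLip_closed H _ \<longleftrightarrow> (\<forall>(X::'w \<Rightarrow> 'a) \<phi>. random_vector H X \<and> C_lLip \<phi> \<longrightarrow> (\<lambda>w. \<phi> (X w)) \<in> H)"

text \<open>Y is independent of X (written X \<dashrightarrow> Y in the paper).\<close>
definition indep_seq :: "(('w \<Rightarrow> real) \<Rightarrow> real) \<Rightarrow> ('w \<Rightarrow> 'a::euclidean_space) \<Rightarrow> ('w \<Rightarrow> 'b::euclidean_space) \<Rightarrow> bool" where
  "indep_seq E X Y \<longleftrightarrow> (\<forall>\<phi>::'a \<times> 'b \<Rightarrow> real. C_bLip \<phi> \<longrightarrow>
      E (\<lambda>w. \<phi> (X w, Y w)) = E (\<lambda>w. (\<lambda>x. E (\<lambda>w'. \<phi> (x, Y w'))) (X w)))"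

definition psd :: "real^'d^'d \<Rightarrow> bool" where
  "psd A \<longleftrightarrow> transpose A = A \<and> (\<forall>x. 0 \<le> x \<bullet> (A *v x))"

definition sqrt_set :: "(real^'d^'d) set \<Rightarrow> (real^'d^'d) set" where
  "sqrt_set \<Sigma> = {B. psd B \<and> B ** B \<in> \<Sigma>}"

definition std_normal_density :: "real^'d \<Rightarrow> real" where
  "std_normal_density x = (2 * pi) powr (- real CARD('d) / 2) * exp (- (norm x)\<^sup>2 / 2)"

end

theory Submission
  imports Defs
begin

(* Write W = V eps. The independence identity for V --> eps is postulated only for bounded
   Lipschitz test functions; truncating the argument to a ball of radius r extends it to locally
   Lipschitz ones, the error being O(1/r) by the polynomial moments of V and eps. Hence
   E[phi(V, eps)] is the supremum over B in Sigma^(1/2) of the Gaussian integral of phi(B, _).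
   For phi(B, x) = (Bx)_i (Bx)_j that integral is (B B^T)_ij = (B^2)_ij, and B |-> B^2 maps
   Sigma^(1/2) onto Sigma by the spectral theorem. Taking -phi gives the lower bound. *)

lemma C_lLipI:
  assumes "\<And>x y. \<bar>f x - f y\<bar> \<le> C * (1 + norm x ^ k + norm y ^ k) * norm (x - y)"
  shows "C_lLip (f :: 'a::euclidean_space \<Rightarrow> real)"
  unfolding C_lLip_def using assms by blast

lemma C_lLipE:
  fixes f :: "'a::euclidean_space \<Rightarrow> real"
  assumes "C_lLip f"
  obtains C k where "C \<ge> 0" "\<And>x y. \<bar>f x - f y\<bar> \<le> C * (1 + norm x ^ k + norm y ^ k) * norm (x - y)"
proof -
  obtain C and k :: nat where C: "\<And>x y. \<bar>f x - f y\<bar> \<le> C * (1 + norm x ^ k + norm y ^ k) * norm (x - y)"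
    using assms unfolding C_lLip_def by blast
  have "C * (1 + norm x ^ k + norm y ^ k) * norm (x - y) \<le> \<bar>C\<bar> * (1 + norm x ^ k + norm y ^ k) * norm (x - y)"
    for x y :: 'a
    by (intro mult_right_mono) auto
  with C show ?thesis by (intro that[of "\<bar>C\<bar>" k]) (auto intro: order_trans[OF C])
qed

lemma C_bLip_imp_C_lLip:
  fixes f :: "'a::euclidean_space \<Rightarrow> real"
  assumes "C_bLip f"
  shows "C_lLip f"
proof -
  obtain L where L: "\<And>x y. \<bar>f x - f y\<bar> \<le> L * norm (x - y)"
    using assms unfolding C_bLip_def by blast
  have "L * norm (x - y) \<le> \<bar>L\<bar> * (1 + norm x ^ 0 + norm y ^ 0) * norm (x - y)" for x y :: 'a
    by (intro mult_right_mono) auto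
  with L show ?thesis by (intro C_lLipI) (rule order_trans)
qed

lemma C_lLip_const_mult:
  fixes f :: "'a::euclidean_space \<Rightarrow> real"
  assumes "C_lLip f"
  shows "C_lLip (\<lambda>x. s * f x)"
proof -
  obtain C k where C: "\<And>x y. \<bar>f x - f y\<bar> \<le> C * (1 + norm x ^ k + norm y ^ k) * norm (x - y)"
    using assms unfolding C_lLip_def by blast
  have "\<bar>s * f x - s * f y\<bar> \<le> (\<bar>s\<bar> * C) * (1 + norm x ^ k + norm y ^ k) * norm (x - y)" for x y
    using mult_left_mono[OF C[of x y], of "\<bar>s\<bar>"]
    by (simp add: abs_mult mult_ac flip: right_diff_distrib)
  then show ?thesis by (rule C_lLipI)
qed

lemma power_sum_le:
  fixes a b :: real
  assumes "a \<ge> 0" "b \<ge> 0"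
  shows "(a + b) ^ k \<le> 2 ^ k * (a ^ k + b ^ k)"
proof -
  have "(a + b) ^ k \<le> (2 * max a b) ^ k"
    using assms by (intro power_mono) auto
  also have "\<dots> = 2 ^ k * max a b ^ k" by (simp add: power_mult_distrib)
  also have "max a b ^ k \<le> a ^ k + b ^ k"
    using assms by (auto simp: max_def)
  finally show ?thesis by simp
qed

lemma norm_Pair_power_le:
  "norm (x, y) ^ k \<le> 2 ^ k * (norm x ^ k + norm y ^ k)"
  using power_mono[OF norm_Pair_le, of x y k] power_sum_le[of "norm x" "norm y" k] by simp

lemma C_lLip_Pair_slice:
  fixes \<psi> :: "'a::euclidean_space \<times> 'b::euclidean_space \<Rightarrow> real"
  assumes "C_lLip \<psi>"
  shows "C_lLip (\<lambda>y. \<psi> (x, y))"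
proof -
  obtain C k where C: "C \<ge> 0" "\<And>p q. \<bar>\<psi> p - \<psi> q\<bar> \<le> C * (1 + norm p ^ k + norm q ^ k) * norm (p - q)"
    using C_lLipE[OF assms] by metis
  define D where "D = 1 + 2 ^ (k + 1) * norm x ^ k"
  have "D \<ge> 1" by (simp add: D_def)
  have bound: "1 + norm (x, y) ^ k + norm (x, y') ^ k \<le> 2 ^ k * D * (1 + norm y ^ k + norm y' ^ k)"
    for y y' :: 'b
  proof -
    have "1 + norm (x, y) ^ k + norm (x, y') ^ k \<le> D + 2 ^ k * (norm y ^ k + norm y' ^ k)"
      using norm_Pair_power_le[of x y k] norm_Pair_power_le[of x y' k] by (simp add: D_def distrib_left)
    also have "\<dots> \<le> 2 ^ k * D + 2 ^ k * D * (norm y ^ k + norm y' ^ k)"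
    proof (intro add_mono mult_right_mono)
      show "D \<le> 2 ^ k * D" using \<open>D \<ge> 1\<close> by simp
      show "2 ^ k \<le> 2 ^ k * D" using \<open>D \<ge> 1\<close> by simp
    qed simp_all
    also have "\<dots> = 2 ^ k * D * (1 + norm y ^ k + norm y' ^ k)"
      by (simp add: algebra_simps)
    finally show ?thesis .
  qed
  have "\<bar>\<psi> (x, y) - \<psi> (x, y')\<bar> \<le> (C * 2 ^ k * D) * (1 + norm y ^ k + norm y' ^ k) * norm (y - y')"
    for y y' :: 'b
  proof -
    have "\<bar>\<psi> (x, y) - \<psi> (x, y')\<bar> \<le> C * (1 + norm (x, y) ^ k + norm (x, y') ^ k) * norm (y - y')"
      using C(2)[of "(x, y)" "(x, y')"] by simp
    also have "\<dots> \<le> C * (2 ^ k * D * (1 + norm y ^ k + norm y' ^ k)) * norm (y - y')"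
      using C(1) bound by (intro mult_right_mono mult_left_mono) auto
    finally show ?thesis by (simp add: mult_ac)
  qed
  then show ?thesis by (rule C_lLipI)
qed

lemma C_lLip_norm_power: "C_lLip (\<lambda>x::'a::euclidean_space. norm x ^ n)"
proof (rule C_lLipI[where C = "real n" and k = "n - 1"])
  fix x y :: 'a
  define a b where "a = norm x" and "b = norm y"
  define M where "M = max a b"
  have ab: "a \<ge> 0" "b \<ge> 0" "a \<le> M" "b \<le> M" by (auto simp: a_def b_def M_def)
  have "b ^ (n - Suc i) * a ^ i \<le> M ^ (n - 1)" if "i < n" for i
  proof -
    have "b ^ (n - Suc i) * a ^ i \<le> M ^ (n - Suc i) * M ^ i"
      using ab by (intro mult_mono power_mono) auto
    also have "\<dots> = M ^ (n - 1)" using that by (simp flip: power_add)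
    finally show ?thesis .
  qed
  then have sum_le: "(\<Sum>i<n. b ^ (n - Suc i) * a ^ i) \<le> real n * M ^ (n - 1)"
    using sum_bounded_above[of "{..<n}" "\<lambda>i. b ^ (n - Suc i) * a ^ i" "M ^ (n - 1)"] by simp
  have "\<bar>a ^ n - b ^ n\<bar> = \<bar>a - b\<bar> * (\<Sum>i<n. b ^ (n - Suc i) * a ^ i)"
    using ab by (simp add: power_diff_sumr2 abs_mult sum_nonneg)
  also have "\<dots> \<le> norm (x - y) * (real n * M ^ (n - 1))"
    unfolding a_def b_def using sum_le ab(1,2)
    by (intro mult_mono norm_triangle_ineq3) (auto simp: a_def b_def intro: sum_nonneg)
  also have "M ^ (n - 1) \<le> 1 + a ^ (n - 1) + b ^ (n - 1)"
    using ab by (auto simp: M_def max_def)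
  finally have "\<bar>a ^ n - b ^ n\<bar> \<le> norm (x - y) * (real n * (1 + a ^ (n - 1) + b ^ (n - 1)))"
    by (simp add: mult_left_mono)
  then show "\<bar>norm x ^ n - norm y ^ n\<bar> \<le> real n * (1 + norm x ^ (n - 1) + norm y ^ (n - 1)) * norm (x - y)"
    by (simp add: a_def b_def mult_ac)
qed

definition cball_retraction :: "real \<Rightarrow> 'a::euclidean_space \<Rightarrow> 'a" where
  "cball_retraction r x = closest_point (cball 0 r) x"

lemma norm_cball_retraction_le: "r \<ge> 0 \<Longrightarrow> norm (cball_retraction r x) \<le> r"
  unfolding cball_retraction_def using closest_point_in_set[of "cball 0 r" x] by auto

lemma cball_retraction_eq_self: "norm x \<le> r \<Longrightarrow> cball_retraction r x = x"
  unfolding cball_retraction_def by (rule closest_point_self) simp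

lemma cball_retraction_lipschitz:
  "r \<ge> 0 \<Longrightarrow> norm (cball_retraction r x - cball_retraction r y) \<le> norm (x - y)"
  unfolding cball_retraction_def using closest_point_lipschitz[of "cball 0 r" x y]
  by (simp add: dist_norm)

lemma norm_diff_cball_retraction_le: "r \<ge> 0 \<Longrightarrow> norm (x - cball_retraction r x) \<le> norm x"
  unfolding cball_retraction_def using closest_point_le[of "cball 0 r" 0 x]
  by (simp add: dist_norm)

lemma C_bLip_comp_cball_retraction:
  fixes \<phi> :: "'a::euclidean_space \<Rightarrow> real"
  assumes "C_lLip \<phi>" "r \<ge> 0"
  shows "C_bLip (\<lambda>x. \<phi> (cball_retraction r x))"
proof -
  obtain C k where C: "C \<ge> 0" "\<And>x y. \<bar>\<phi> x - \<phi> y\<bar> \<le> C * (1 + norm x ^ k + norm y ^ k) * norm (x - y)"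
    using C_lLipE[OF assms(1)] by metis
  define R :: "'a \<Rightarrow> 'a" where "R = cball_retraction r"
  define L where "L = C * (1 + r ^ k + r ^ k)"
  have lip: "\<bar>\<phi> (R x) - \<phi> (R y)\<bar> \<le> L * norm (x - y)" for x y
  proof -
    have "\<bar>\<phi> (R x) - \<phi> (R y)\<bar> \<le> C * (1 + norm (R x) ^ k + norm (R y) ^ k) * norm (R x - R y)"
      by (rule C(2))
    also have "\<dots> \<le> L * norm (x - y)"
      unfolding L_def R_def using assms(2) C(1)
      by (intro mult_mono mult_left_mono add_mono power_mono norm_cball_retraction_le
          cball_retraction_lipschitz) auto
    finally show ?thesis .
  qed
  \<comment> \<open>R is idempotent and fixes 0, so the Lipschitz bound through R also bounds the values.\<close>
  have "\<bar>\<phi> (R x)\<bar> \<le> \<bar>\<phi> 0\<bar> + L * r" for x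
  proof -
    have R_0: "R 0 = 0" and R_R: "R (R x) = R x"
      using assms(2) cball_retraction_eq_self[OF norm_cball_retraction_le[OF assms(2)]]
      by (auto simp: R_def cball_retraction_eq_self)
    have "\<bar>\<phi> (R x) - \<phi> 0\<bar> \<le> L * norm (R x)"
      using lip[of "R x" 0] by (simp add: R_0 R_R)
    also have "\<dots> \<le> L * r"
      using assms(2) C(1) by (auto simp: L_def R_def intro!: mult_left_mono norm_cball_retraction_le)
    finally show ?thesis by linarith
  qed
  with lip show ?thesis unfolding C_bLip_def R_def by blast
qed

lemma cball_retraction_error:
  fixes \<phi> :: "'a::euclidean_space \<Rightarrow> real"
  assumes "C_lLip \<phi>"
  obtains c m where "c \<ge> 0"
    "\<And>r x. r \<ge> 1 \<Longrightarrow> \<bar>\<phi> x - \<phi> (cball_retraction r x)\<bar> \<le> c / r * norm x ^ m"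
proof -
  obtain C k where C: "C \<ge> 0" "\<And>x y. \<bar>\<phi> x - \<phi> y\<bar> \<le> C * (1 + norm x ^ k + norm y ^ k) * norm (x - y)"
    using C_lLipE[OF assms] by metis
  have "\<bar>\<phi> x - \<phi> (cball_retraction r x)\<bar> \<le> 3 * C / r * norm x ^ (k + 2)" if r: "r \<ge> 1" for r x
  proof (cases "norm x \<le> r")
    case True
    then show ?thesis using r C(1) by (simp add: cball_retraction_eq_self)
  next
    case False
    define R where "R = cball_retraction r x"
    have x: "1 \<le> norm x" "r \<le> norm x" using False r by auto
    have "\<bar>\<phi> x - \<phi> R\<bar> \<le> C * (1 + norm x ^ k + norm R ^ k) * norm (x - R)"
      by (rule C(2))
    also have "\<dots> \<le> C * (3 * norm x ^ k) * norm x"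
    proof (intro mult_mono mult_left_mono)
      have "norm R ^ k \<le> norm x ^ k"
        using norm_cball_retraction_le[of r x] x r by (intro power_mono) (auto simp: R_def)
      moreover have "1 \<le> norm x ^ k" using x(1) by (rule one_le_power)
      ultimately show "1 + norm x ^ k + norm R ^ k \<le> 3 * norm x ^ k" by linarith
      show "norm (x - R) \<le> norm x"
        using r by (simp add: R_def norm_diff_cball_retraction_le)
    qed (use C(1) in auto)
    also have "\<dots> = 3 * C * norm x ^ (k + 2) / norm x"
      using x by (simp add: power2_eq_square field_simps)
    also have "\<dots> \<le> 3 * C * norm x ^ (k + 2) / r"
      using x r C(1) by (intro divide_left_mono) (auto intro!: mult_pos_pos)
    finally show ?thesis by (simp add: R_def)
  qed
  with C(1) show ?thesis by (intro that[of "3 * C" "k + 2"]) auto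
qed

lemma eq_0_if_abs_le_div:
  fixes a K :: real
  assumes "\<And>r. r \<ge> 1 \<Longrightarrow> \<bar>a\<bar> \<le> K / r"
  shows "a = 0"
proof -
  have "((\<lambda>r. K / r) \<longlongrightarrow> 0) at_top"
    by (intro tendsto_divide_0[OF tendsto_const] filterlim_at_top_imp_at_infinity filterlim_ident)
  moreover have "eventually (\<lambda>r. \<bar>a\<bar> \<le> K / r) at_top"
    using eventually_ge_at_top[of "1::real"] by eventually_elim (rule assms)
  ultimately have "\<bar>a\<bar> \<le> 0"
    by (intro tendsto_le[OF trivial_limit_at_top_linorder _ tendsto_const])
  then show ?thesis by simp
qed

lemma random_vector_Pair:
  assumes "random_vector H X" "random_vector H Y"
  shows "random_vector H (\<lambda>w. (X w, Y w))"
  using assms unfolding random_vector_def by (auto simp: Basis_prod_def)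

locale sublinear_expectation_space =
  fixes H :: "('w \<Rightarrow> real) set" and E :: "('w \<Rightarrow> real) \<Rightarrow> real"
  assumes sublinear: "sublinear_expectation H E"
begin

lemma const_in_H: "(\<lambda>_. c) \<in> H"
  and add_in_H: "X \<in> H \<Longrightarrow> Y \<in> H \<Longrightarrow> (\<lambda>w. X w + Y w) \<in> H"
  and mult_in_H: "X \<in> H \<Longrightarrow> (\<lambda>w. a * X w) \<in> H"
  and E_mono: "X \<in> H \<Longrightarrow> Y \<in> H \<Longrightarrow> (\<And>w. X w \<le> Y w) \<Longrightarrow> E X \<le> E Y"
  and E_const: "E (\<lambda>_. c) = c"
  and E_add_le: "X \<in> H \<Longrightarrow> Y \<in> H \<Longrightarrow> E (\<lambda>w. X w + Y w) \<le> E X + E Y"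
  and E_mult: "X \<in> H \<Longrightarrow> a \<ge> 0 \<Longrightarrow> E (\<lambda>w. a * X w) = a * E X"
  using sublinear unfolding sublinear_expectation_def by blast+

lemma comp_in_H:
  fixes X :: "'w \<Rightarrow> 'a::euclidean_space"
  assumes "lLip_closed H TYPE('a)" "random_vector H X" "C_lLip f"
  shows "(\<lambda>w. f (X w)) \<in> H"
  using assms unfolding lLip_closed_def by blast

lemma E_nonneg: "X \<in> H \<Longrightarrow> (\<And>w. 0 \<le> X w) \<Longrightarrow> 0 \<le> E X"
  using E_mono[OF const_in_H, of X 0] by (simp add: E_const)

lemma E_add_const: "X \<in> H \<Longrightarrow> E (\<lambda>w. c + X w) = c + E X"
proof (rule antisym)
  assume X: "X \<in> H"
  show "E (\<lambda>w. c + X w) \<le> c + E X"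
    using E_add_le[OF const_in_H X] by (simp add: E_const)
  have "E X \<le> E (\<lambda>_. - c) + E (\<lambda>w. c + X w)"
    using E_add_le[OF const_in_H add_in_H[OF const_in_H X], of "- c" c] by simp
  then show "c + E X \<le> E (\<lambda>w. c + X w)" by (simp add: E_const)
qed

lemma E_affine: "X \<in> H \<Longrightarrow> a \<ge> 0 \<Longrightarrow> E (\<lambda>w. a * (c + X w)) = a * (c + E X)"
  by (simp add: E_mult E_add_const add_in_H const_in_H)

lemma E_scaled_add_le:
  "X \<in> H \<Longrightarrow> Y \<in> H \<Longrightarrow> a \<ge> 0 \<Longrightarrow> E (\<lambda>w. a * (X w + Y w)) \<le> a * (E X + E Y)"
  by (simp add: E_mult E_add_le add_in_H mult_left_mono)

lemma abs_E_diff_le: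
  assumes "X \<in> H" "Y \<in> H" "Z \<in> H" "\<And>w. \<bar>X w - Y w\<bar> \<le> Z w"
  shows "\<bar>E X - E Y\<bar> \<le> E Z"
proof -
  have "E X \<le> E Y + E Z" if "X \<in> H" "Y \<in> H" "\<And>w. X w - Y w \<le> Z w" for X Y
  proof -
    have "E X \<le> E (\<lambda>w. Y w + Z w)"
      using that assms(3) by (intro E_mono add_in_H) (auto simp: algebra_simps)
    also have "\<dots> \<le> E Y + E Z" by (rule E_add_le[OF that(2) assms(3)])
    finally show ?thesis .
  qed
  from this[of X Y] this[of Y X] show ?thesis
    using assms by (auto simp: abs_le_iff abs_minus_commute)
qed

lemma C_lLip_E_Pair_slice:
  fixes Y :: "'w \<Rightarrow> 'b::euclidean_space" and \<psi> :: "'a::euclidean_space \<times> 'b \<Rightarrow> real"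
  assumes "lLip_closed H TYPE('b)" "random_vector H Y" "C_lLip \<psi>"
  shows "C_lLip (\<lambda>x. E (\<lambda>w. \<psi> (x, Y w)))"
proof -
  obtain C k where C: "C \<ge> 0" "\<And>p q. \<bar>\<psi> p - \<psi> q\<bar> \<le> C * (1 + norm p ^ k + norm q ^ k) * norm (p - q)"
    using C_lLipE[OF assms(3)] by metis
  have slice_in_H: "(\<lambda>w. \<psi> (x, Y w)) \<in> H" for x
    using assms by (intro comp_in_H C_lLip_Pair_slice)
  define Yk where "Yk w = 2 ^ (k + 1) * norm (Y w) ^ k" for w
  have Yk_in_H: "Yk \<in> H"
    unfolding Yk_def using assms by (intro mult_in_H comp_in_H C_lLip_norm_power)
  define m where "m = E Yk"
  have "m \<ge> 0" unfolding m_def Yk_def by (rule E_nonneg[OF Yk_in_H[unfolded Yk_def]]) simp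
  show ?thesis
  proof (rule C_lLipI[where C = "C * (2 ^ k + m)" and k = k])
    fix x x' :: 'a
    define c where "c = 1 + 2 ^ k * (norm x ^ k + norm x' ^ k)"
    have "\<bar>\<psi> (x, Y w) - \<psi> (x', Y w)\<bar> \<le> (C * norm (x - x')) * (c + Yk w)" for w
    proof -
      have "1 + norm (x, Y w) ^ k + norm (x', Y w) ^ k \<le> c + Yk w"
        using norm_Pair_power_le[of x "Y w" k] norm_Pair_power_le[of x' "Y w" k]
        by (simp add: c_def Yk_def algebra_simps)
      then have "C * (1 + norm (x, Y w) ^ k + norm (x', Y w) ^ k) * norm (x - x') \<le> C * (c + Yk w) * norm (x - x')"
        using C(1) by (intro mult_right_mono mult_left_mono) auto
      with C(2)[of "(x, Y w)" "(x', Y w)"] show ?thesis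
        by (simp add: mult_ac)
    qed
    then have "\<bar>E (\<lambda>w. \<psi> (x, Y w)) - E (\<lambda>w. \<psi> (x', Y w))\<bar>
        \<le> E (\<lambda>w. (C * norm (x - x')) * (c + Yk w))"
      using C(1) by (intro abs_E_diff_le slice_in_H mult_in_H add_in_H const_in_H Yk_in_H)
    also have "\<dots> = C * norm (x - x') * (c + m)"
      using C(1) by (simp add: E_affine Yk_in_H m_def)
    also have "\<dots> \<le> C * (2 ^ k + m) * (1 + norm x ^ k + norm x' ^ k) * norm (x - x')"
    proof -
      have "c + m \<le> (2 ^ k + m) * (1 + norm x ^ k + norm x' ^ k)"
        using \<open>m \<ge> 0\<close> by (simp add: c_def algebra_simps add_mono add_increasing)
      then have "C * norm (x - x') * (c + m) \<le> C * norm (x - x') * ((2 ^ k + m) * (1 + norm x ^ k + norm x' ^ k))"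
        using C(1) by (intro mult_left_mono) auto
      then show ?thesis by (simp add: mult_ac)
    qed
    finally show "\<bar>E (\<lambda>w. \<psi> (x, Y w)) - E (\<lambda>w. \<psi> (x', Y w))\<bar>
        \<le> C * (2 ^ k + m) * (1 + norm x ^ k + norm x' ^ k) * norm (x - x')" .
  qed
qed

lemma abs_E_Pair_diff_le:
  fixes X :: "'w \<Rightarrow> 'a::euclidean_space" and Y :: "'w \<Rightarrow> 'b::euclidean_space"
  assumes closed: "lLip_closed H TYPE('a)" "lLip_closed H TYPE('b)" "lLip_closed H TYPE('a \<times> 'b)"
    and rv: "random_vector H X" "random_vector H Y"
    and lLip: "C_lLip \<phi>" "C_lLip \<psi>"
    and close: "\<And>x y. \<bar>\<phi> (x, y) - \<psi> (x, y)\<bar> \<le> a * (norm x ^ m + norm y ^ m)" and "a \<ge> 0"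
  shows "\<bar>E (\<lambda>w. \<phi> (X w, Y w)) - E (\<lambda>w. \<psi> (X w, Y w))\<bar>
      \<le> a * (E (\<lambda>w. norm (X w) ^ m) + E (\<lambda>w. norm (Y w) ^ m))"
    and "\<bar>E (\<lambda>w. E (\<lambda>w'. \<phi> (X w, Y w'))) - E (\<lambda>w. E (\<lambda>w'. \<psi> (X w, Y w')))\<bar>
      \<le> a * (E (\<lambda>w. norm (X w) ^ m) + E (\<lambda>w. norm (Y w) ^ m))"
proof -
  have X_m: "(\<lambda>w. norm (X w) ^ m) \<in> H"
    using closed(1) rv(1) C_lLip_norm_power by (rule comp_in_H)
  have Y_m: "(\<lambda>w. norm (Y w) ^ m) \<in> H"
    using closed(2) rv(2) C_lLip_norm_power by (rule comp_in_H)
  have Pair_in_H: "(\<lambda>w. f (X w, Y w)) \<in> H" if "C_lLip f" for f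
    using closed(3) random_vector_Pair[OF rv] that by (rule comp_in_H)
  have slice_in_H: "(\<lambda>w. f (x, Y w)) \<in> H" if "C_lLip f" for f :: "'a \<times> 'b \<Rightarrow> real" and x
    using closed(2) rv(2) C_lLip_Pair_slice[OF that] by (rule comp_in_H)
  have iterated_in_H: "(\<lambda>w. E (\<lambda>w'. f (X w, Y w'))) \<in> H" if "C_lLip f" for f
    using closed(1) rv(1) C_lLip_E_Pair_slice[OF closed(2) rv(2) that] by (rule comp_in_H)
  have "\<bar>E (\<lambda>w. \<phi> (X w, Y w)) - E (\<lambda>w. \<psi> (X w, Y w))\<bar>
      \<le> E (\<lambda>w. a * (norm (X w) ^ m + norm (Y w) ^ m))"
    using lLip close \<open>a \<ge> 0\<close> X_m Y_m
    by (intro abs_E_diff_le Pair_in_H mult_in_H add_in_H)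
  also have "\<dots> \<le> a * (E (\<lambda>w. norm (X w) ^ m) + E (\<lambda>w. norm (Y w) ^ m))"
    by (rule E_scaled_add_le[OF X_m Y_m \<open>a \<ge> 0\<close>])
  finally show "\<bar>E (\<lambda>w. \<phi> (X w, Y w)) - E (\<lambda>w. \<psi> (X w, Y w))\<bar>
      \<le> a * (E (\<lambda>w. norm (X w) ^ m) + E (\<lambda>w. norm (Y w) ^ m))" .
  have "\<bar>E (\<lambda>w'. \<phi> (x, Y w')) - E (\<lambda>w'. \<psi> (x, Y w'))\<bar>
      \<le> a * (E (\<lambda>w. norm (Y w) ^ m) + norm x ^ m)" for x
  proof -
    have "\<bar>E (\<lambda>w'. \<phi> (x, Y w')) - E (\<lambda>w'. \<psi> (x, Y w'))\<bar>
        \<le> E (\<lambda>w'. a * (norm x ^ m + norm (Y w') ^ m))"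
      using lLip close Y_m by (intro abs_E_diff_le slice_in_H mult_in_H add_in_H const_in_H)
    also have "\<dots> = a * (E (\<lambda>w. norm (Y w) ^ m) + norm x ^ m)"
      by (simp add: E_affine[OF Y_m \<open>a \<ge> 0\<close>] add.commute)
    finally show ?thesis .
  qed
  then have "\<bar>E (\<lambda>w. E (\<lambda>w'. \<phi> (X w, Y w'))) - E (\<lambda>w. E (\<lambda>w'. \<psi> (X w, Y w')))\<bar>
      \<le> E (\<lambda>w. a * (E (\<lambda>w. norm (Y w) ^ m) + norm (X w) ^ m))"
    using lLip X_m by (intro abs_E_diff_le iterated_in_H mult_in_H add_in_H const_in_H)
  also have "\<dots> = a * (E (\<lambda>w. norm (X w) ^ m) + E (\<lambda>w. norm (Y w) ^ m))"
    by (simp add: E_affine[OF X_m \<open>a \<ge> 0\<close>])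
  finally show "\<bar>E (\<lambda>w. E (\<lambda>w'. \<phi> (X w, Y w'))) - E (\<lambda>w. E (\<lambda>w'. \<psi> (X w, Y w')))\<bar>
      \<le> a * (E (\<lambda>w. norm (X w) ^ m) + E (\<lambda>w. norm (Y w) ^ m))" .
qed

lemma indep_seq_C_lLip:
  fixes X :: "'w \<Rightarrow> 'a::euclidean_space" and Y :: "'w \<Rightarrow> 'b::euclidean_space"
  assumes closed: "lLip_closed H TYPE('a)" "lLip_closed H TYPE('b)" "lLip_closed H TYPE('a \<times> 'b)"
    and rv: "random_vector H X" "random_vector H Y"
    and indep: "indep_seq E X Y" and \<phi>: "C_lLip \<phi>"
  shows "E (\<lambda>w. \<phi> (X w, Y w)) = E (\<lambda>w. E (\<lambda>w'. \<phi> (X w, Y w')))"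
proof -
  obtain c m where "c \<ge> 0"
    and err: "\<And>r p. r \<ge> 1 \<Longrightarrow> \<bar>\<phi> p - \<phi> (cball_retraction r p)\<bar> \<le> c / r * norm p ^ m"
    using cball_retraction_error[OF \<phi>] by metis
  define K where "K = 2 * (c * 2 ^ m) * (E (\<lambda>w. norm (X w) ^ m) + E (\<lambda>w. norm (Y w) ^ m))"
  have "\<bar>E (\<lambda>w. \<phi> (X w, Y w)) - E (\<lambda>w. E (\<lambda>w'. \<phi> (X w, Y w')))\<bar> \<le> K / r" if "r \<ge> 1" for r
  proof -
    define \<phi>\<^sub>r where "\<phi>\<^sub>r p = \<phi> (cball_retraction r p)" for p
    have bLip: "C_bLip \<phi>\<^sub>r"
      unfolding \<phi>\<^sub>r_def using \<phi> that by (intro C_bLip_comp_cball_retraction) auto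
    have close_pointwise: "\<bar>\<phi> (x, y) - \<phi>\<^sub>r (x, y)\<bar> \<le> (c * 2 ^ m / r) * (norm x ^ m + norm y ^ m)" for x y
    proof -
      have "\<bar>\<phi> (x, y) - \<phi>\<^sub>r (x, y)\<bar> \<le> c / r * norm (x, y) ^ m"
        unfolding \<phi>\<^sub>r_def by (rule err[OF that])
      also have "\<dots> \<le> c / r * (2 ^ m * (norm x ^ m + norm y ^ m))"
        using \<open>c \<ge> 0\<close> that by (intro mult_left_mono norm_Pair_power_le) auto
      finally show ?thesis by simp
    qed
    have "c * 2 ^ m / r \<ge> 0" using \<open>c \<ge> 0\<close> that by simp
    note close = abs_E_Pair_diff_le[OF closed rv \<phi> C_bLip_imp_C_lLip[OF bLip] close_pointwise this]
    have "E (\<lambda>w. \<phi>\<^sub>r (X w, Y w)) = E (\<lambda>w. E (\<lambda>w'. \<phi>\<^sub>r (X w, Y w')))"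
      using indep bLip unfolding indep_seq_def by blast
    with close have "\<bar>E (\<lambda>w. \<phi> (X w, Y w)) - E (\<lambda>w. E (\<lambda>w'. \<phi> (X w, Y w')))\<bar>
        \<le> 2 * (c * 2 ^ m / r * (E (\<lambda>w. norm (X w) ^ m) + E (\<lambda>w. norm (Y w) ^ m)))"
      by linarith
    then show ?thesis by (simp add: K_def)
  qed
  then show ?thesis
    using eq_0_if_abs_le_div[of "E (\<lambda>w. \<phi> (X w, Y w)) - E (\<lambda>w. E (\<lambda>w'. \<phi> (X w, Y w')))" K] by simp
qed

lemma E_semi_G_normal_Pair:
  fixes \<Sigma> :: "(real^'n^'n) set" and V :: "'w \<Rightarrow> real^'n^'n" and \<epsilon> :: "'w \<Rightarrow> real^'n"
  assumes closed: "lLip_closed H TYPE(real^'n^'n)" "lLip_closed H TYPE(real^'n)"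
      "lLip_closed H TYPE((real^'n^'n) \<times> (real^'n))"
    and rv: "random_vector H V" "random_vector H \<epsilon>"
    and V_dist: "\<forall>\<phi>::real^'n^'n \<Rightarrow> real. C_lLip \<phi> \<longrightarrow>
      E (\<lambda>w. \<phi> (V w)) = (SUP B\<in>sqrt_set \<Sigma>. \<phi> B)"
    and eps_dist: "\<forall>\<phi>::real^'n \<Rightarrow> real. C_lLip \<phi> \<longrightarrow>
      E (\<lambda>w. \<phi> (\<epsilon> w)) = (LINT x|lborel. \<phi> x * std_normal_density x)"
    and indep: "indep_seq E V \<epsilon>" and \<phi>: "C_lLip \<phi>"
  shows "E (\<lambda>w. \<phi> (V w, \<epsilon> w)) = (SUP B\<in>sqrt_set \<Sigma>. LINT x|lborel. \<phi> (B, x) * std_normal_density x)"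
proof -
  have "E (\<lambda>w. \<phi> (V w, \<epsilon> w)) = E (\<lambda>w. E (\<lambda>w'. \<phi> (V w, \<epsilon> w')))"
    by (rule indep_seq_C_lLip[OF closed rv indep \<phi>])
  also have "\<dots> = (SUP B\<in>sqrt_set \<Sigma>. E (\<lambda>w'. \<phi> (B, \<epsilon> w')))"
    using V_dist C_lLip_E_Pair_slice[OF closed(2) rv(2) \<phi>] by blast
  also have "\<dots> = (SUP B\<in>sqrt_set \<Sigma>. LINT x|lborel. \<phi> (B, x) * std_normal_density x)"
    using eps_dist C_lLip_Pair_slice[OF \<phi>] by (intro SUP_cong) auto
  finally show ?thesis .
qed

end

lemma quadratic_nonpos_imp_linear_coeff_zero:
  fixes a c :: real
  assumes "\<And>t. 2 * t * c + t\<^sup>2 * a \<le> 0"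
  shows "c = 0"
proof (rule ccontr)
  assume "c \<noteq> 0"
  define t where "t = c / (\<bar>a\<bar> + 1)"
  have t: "t * (\<bar>a\<bar> + 1) = c" by (simp add: t_def add_nonneg_pos)
  have "(\<bar>a\<bar> + 1)\<^sup>2 * (2 * t * c + t\<^sup>2 * a)
      = 2 * (t * (\<bar>a\<bar> + 1)) * c * (\<bar>a\<bar> + 1) + (t * (\<bar>a\<bar> + 1))\<^sup>2 * a"
    by (simp add: power2_eq_square algebra_simps)
  also have "\<dots> = c\<^sup>2 * (2 * (\<bar>a\<bar> + 1) + a)" unfolding t by (simp add: power2_eq_square algebra_simps)
  finally have "(\<bar>a\<bar> + 1)\<^sup>2 * (2 * t * c + t\<^sup>2 * a) = c\<^sup>2 * (2 * (\<bar>a\<bar> + 1) + a)" .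
  moreover have "(\<bar>a\<bar> + 1)\<^sup>2 * (2 * t * c + t\<^sup>2 * a) \<le> 0"
    using assms[of t] by (simp add: mult_nonneg_nonpos)
  moreover have "c\<^sup>2 * (2 * (\<bar>a\<bar> + 1) + a) > 0"
    using \<open>c \<noteq> 0\<close> by (intro mult_pos_pos) (auto simp: abs_if)
  ultimately show False by linarith
qed

lemma selfadjoint_Rayleigh_maximizer_is_eigenvector:
  fixes f :: "'a::euclidean_space \<Rightarrow> 'a"
  assumes lin: "linear f" and sa: "\<And>x y. f x \<bullet> y = x \<bullet> f y"
    and S: "subspace S" "f ` S \<subseteq> S" "S \<noteq> {0}"
  obtains u where "u \<in> S" "norm u = 1" "f u = (u \<bullet> f u) *\<^sub>R u"
proof -
  define K where "K = S \<inter> sphere 0 1"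
  obtain z where z: "z \<in> S" "z \<noteq> 0" using S subspace_0 by blast
  have "compact K"
    unfolding K_def using closed_subspace[OF S(1)] by (intro closed_Int_compact) auto
  moreover have "z /\<^sub>R norm z \<in> K"
    unfolding K_def using z S(1) by (auto simp: subspace_scale)
  moreover have "continuous_on K (\<lambda>x. x \<bullet> f x)"
    using lin by (intro continuous_intros linear_continuous_on linear_conv_bounded_linear[THEN iffD1])
  ultimately obtain u where uK: "u \<in> K" and umax: "\<And>y. y \<in> K \<Longrightarrow> y \<bullet> f y \<le> u \<bullet> f u"
    using continuous_attains_sup[of K "\<lambda>x. x \<bullet> f x"] by blast
  have uS: "u \<in> S" and uu: "u \<bullet> u = 1" using uK by (auto simp: K_def dot_square_norm)
  \<comment> \<open>First-order optimality: the Rayleigh quotient is stationary at u in every direction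
      orthogonal to u.\<close>
  have perp: "v \<bullet> f u = 0" if vS: "v \<in> S" and vu: "v \<bullet> u = 0" for v
  proof (rule quadratic_nonpos_imp_linear_coeff_zero)
    fix t :: real
    define y where "y = u + t *\<^sub>R v"
    have ny: "(norm y)\<^sup>2 = 1 + t\<^sup>2 * (v \<bullet> v)"
      using vu uu unfolding power2_norm_eq_inner by (simp add: y_def
          inner_commute power2_eq_square algebra_simps)
    hence "norm y > 0"
      by (smt (verit) inner_ge_zero mult_nonneg_nonneg norm_ge_zero power_zero_numeral zero_le_power2)
    hence "y /\<^sub>R norm y \<in> K" using S(1) uS vS by (auto simp: K_def y_def subspace_scale subspace_add)
    from umax[OF this] have "y \<bullet> f y \<le> (u \<bullet> f u) * (norm y)\<^sup>2"
      using \<open>norm y > 0\<close> by (simp add: linear_scale[OF lin] power2_eq_square field_simps)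
    moreover have "y \<bullet> f y = u \<bullet> f u + 2 * t * (v \<bullet> f u) + t\<^sup>2 * (v \<bullet> f v)"
      using sa[of v u] by (simp add: y_def linear_add[OF lin] linear_scale[OF lin] inner_commute power2_eq_square algebra_simps)
    ultimately show "2 * t * (v \<bullet> f u) + t\<^sup>2 * (v \<bullet> f v - (u \<bullet> f u) * (v \<bullet> v)) \<le> 0"
      unfolding ny by (simp add: algebra_simps)
  qed
  define w where "w = f u - (u \<bullet> f u) *\<^sub>R u"
  have "w \<in> S" using S uS by (auto simp: w_def subspace_diff subspace_scale)
  moreover have "w \<bullet> u = 0" using uu by (simp add: w_def inner_diff_left inner_diff_right inner_commute)
  ultimately have "w \<bullet> w = 0"
    using perp by (simp add: w_def inner_diff_right)
  hence "f u = (u \<bullet> f u) *\<^sub>R u" by (simp add: w_def)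
  with uS uK show ?thesis by (intro that) (auto simp: K_def)
qed

lemma selfadjoint_orthogonal_complement_invariant:
  assumes sa: "\<And>x y. f x \<bullet> y = x \<bullet> f y" and "f ` S \<subseteq> S" and eig: "f u = c *\<^sub>R u"
  shows "f ` (S \<inter> {x. orthogonal u x}) \<subseteq> S \<inter> {x. orthogonal u x}"
proof
  fix y assume "y \<in> f ` (S \<inter> {x. orthogonal u x})"
  then obtain x where x: "x \<in> S" "orthogonal u x" "y = f x" by blast
  have "u \<bullet> f x = f u \<bullet> x" by (simp add: sa)
  also have "\<dots> = 0" using x(2) by (simp add: eig orthogonal_def)
  finally show "y \<in> S \<inter> {x. orthogonal u x}" using x assms(2) by (auto simp: orthogonal_def)
qed

lemma subspace_subset_span_insert_orthogonal:
  assumes S: "subspace S" "u \<in> S" "norm u = 1" and U: "span U = S \<inter> {x. orthogonal u x}"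
  shows "S \<subseteq> span (insert u U)"
proof
  fix x assume "x \<in> S"
  have "u \<bullet> u = 1" using S(3) by (simp add: dot_square_norm)
  with \<open>x \<in> S\<close> S have "x - (x \<bullet> u) *\<^sub>R u \<in> span U"
    by (auto simp: U orthogonal_def subspace_diff subspace_scale inner_diff_right inner_commute)
  hence "x - (x \<bullet> u) *\<^sub>R u \<in> span (insert u U)"
    using span_mono[of U "insert u U"] by auto
  moreover have "(x \<bullet> u) *\<^sub>R u \<in> span (insert u U)"
    by (intro span_scale span_base) simp
  ultimately show "x \<in> span (insert u U)"
    using span_add by fastforce
qed

lemma selfadjoint_orthonormal_eigenbasis:
  fixes f :: "'a::euclidean_space \<Rightarrow> 'a"
  assumes lin: "linear f" and sa: "\<And>x y. f x \<bullet> y = x \<bullet> f y"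
  shows "subspace S \<Longrightarrow> f ` S \<subseteq> S \<Longrightarrow> \<exists>U. U \<subseteq> S \<and> span U = S \<and> pairwise orthogonal U \<and>
     (\<forall>u\<in>U. norm u = 1 \<and> (\<exists>c. f u = c *\<^sub>R u))"
proof (induction "dim S" arbitrary: S rule: less_induct)
  case less
  show ?case
  proof (cases "S = {0}")
    case True
    then show ?thesis by (intro exI[of _ "{}"]) auto
  next
    case False
    with less.prems obtain u where uS: "u \<in> S" and nu: "norm u = 1" and eig: "f u = (u \<bullet> f u) *\<^sub>R u"
      by (rule selfadjoint_Rayleigh_maximizer_is_eigenvector[OF lin sa])
    have uu: "u \<bullet> u = 1" using nu by (simp add: dot_square_norm)
    define S' where "S' = S \<inter> {x. orthogonal u x}"
    have sub': "subspace S'"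
      unfolding S'_def using less.prems(1) subspace_orthogonal_to_vector[of u] by (rule subspace_inter)
    have inv': "f ` S' \<subseteq> S'"
      unfolding S'_def using sa less.prems(2) eig by (rule selfadjoint_orthogonal_complement_invariant)
    have "u \<notin> S'" using uu by (simp add: S'_def orthogonal_def)
    hence "S' \<subset> S" using uS by (auto simp: S'_def)
    hence "dim S' < dim S"
      using dim_psubset[of S' S] less.prems(1) sub' by (simp only: span_eq_iff[THEN iffD2])
    from less.hyps[OF this sub' inv'] obtain U' where U': "U' \<subseteq> S'" "span U' = S'"
      "pairwise orthogonal U'" "\<forall>u\<in>U'. norm u = 1 \<and> (\<exists>c. f u = c *\<^sub>R u)"
      by blast
    have "S \<subseteq> span (insert u U')"
      using less.prems(1) uS nu U'(2) unfolding S'_def by (rule subspace_subset_span_insert_orthogonal)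
    moreover have "span (insert u U') \<subseteq> S"
      using U'(1) uS less.prems(1) by (intro span_minimal) (auto simp: S'_def)
    moreover have "pairwise orthogonal (insert u U')"
      using U'(1,3) by (intro pairwise_orthogonal_insert) (auto simp: S'_def)
    ultimately show ?thesis
      using U' uS nu eig by (intro exI[of _ "insert u U'"]) (auto simp: S'_def)
  qed
qed

lemma inner_sum_orthonormal:
  fixes U :: "'a::euclidean_space set"
  assumes "pairwise orthogonal U" "\<forall>u\<in>U. norm u = 1" "v \<in> U"
  shows "v \<bullet> (\<Sum>u\<in>U. c u *\<^sub>R u) = c v"
proof -
  have "v \<bullet> (\<Sum>u\<in>U. c u *\<^sub>R u) = (\<Sum>u\<in>U. if u = v then c v else 0)"
    using assms unfolding inner_sum_right
    by (intro sum.cong refl) (auto simp: dot_square_norm pairwise_def orthogonal_def)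
  also have "\<dots> = c v" using assms(3) pairwise_orthogonal_imp_finite[OF assms(1)] by simp
  finally show ?thesis .
qed

lemma orthonormal_basis_expansion:
  fixes U :: "'a::euclidean_space set"
  assumes "pairwise orthogonal U" "\<forall>u\<in>U. norm u = 1" "span U = UNIV"
  shows "x = (\<Sum>u\<in>U. (u \<bullet> x) *\<^sub>R u)"
proof -
  obtain c where c: "x = (\<Sum>u\<in>U. c u *\<^sub>R u)"
    using span_finite[OF pairwise_orthogonal_imp_finite[OF assms(1)]] assms(3) by auto
  have "u \<bullet> x = c u" if "u \<in> U" for u
    unfolding c using assms(1,2) that by (rule inner_sum_orthonormal)
  with c show ?thesis by (metis (no_types, lifting) sum.cong)
qed

lemma outer_product_sum_mult_vector:
  fixes U :: "(real^'n) set"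
  assumes "finite U"
  shows "(\<chi> i j. \<Sum>u\<in>U. s u * u$i * u$j) *v x = (\<Sum>u\<in>U. (s u * (u \<bullet> x)) *\<^sub>R u)"
proof -
  have "(\<Sum>j\<in>UNIV. (\<Sum>u\<in>U. s u * u$i * u$j) * x$j) = (\<Sum>u\<in>U. s u * u$i * (u \<bullet> x))" for i
    unfolding sum_distrib_right inner_vec_def sum_distrib_left
    by (subst sum.swap) (simp add: mult.assoc)
  then show ?thesis
    using assms by (simp add: vec_eq_iff matrix_vector_mult_def mult_ac)
qed

lemma psd_square_root:
  fixes A :: "real^'n^'n"
  assumes "psd A"
  obtains B where "psd B" "B ** B = A"
proof -
  have A_sym: "transpose A = A" and A_pos: "\<And>x. 0 \<le> x \<bullet> (A *v x)"
    using assms by (auto simp: psd_def)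
  have "(A *v x) \<bullet> y = x \<bullet> (A *v y)" for x y
    by (metis A_sym dot_lmul_matrix vector_transpose_matrix)
  from selfadjoint_orthonormal_eigenbasis[OF matrix_vector_mul_linear this, of UNIV]
  obtain U where U: "span U = UNIV" "pairwise orthogonal U" "\<forall>u\<in>U. norm u = 1"
    and eig_ex: "\<forall>u\<in>U. \<exists>c. A *v u = c *\<^sub>R u"
    by auto
  have fin: "finite U" by (rule pairwise_orthogonal_imp_finite[OF U(2)])
  define lam where "lam u = u \<bullet> (A *v u)" for u
  have eig: "A *v u = lam u *\<^sub>R u" if "u \<in> U" for u
    using eig_ex that U(3) by (force simp: lam_def dot_square_norm)
  define B :: "real^'n^'n" where "B = (\<chi> i j. \<Sum>u\<in>U. sqrt (lam u) * u$i * u$j)"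
  have B: "B *v x = (\<Sum>u\<in>U. (sqrt (lam u) * (u \<bullet> x)) *\<^sub>R u)" for x
    unfolding B_def by (rule outer_product_sum_mult_vector[OF fin])
  have A: "A *v x = (\<Sum>u\<in>U. (lam u * (u \<bullet> x)) *\<^sub>R u)" for x
  proof -
    have "A *v x = (\<Sum>u\<in>U. (u \<bullet> x) *\<^sub>R (A *v u))"
      by (subst orthonormal_basis_expansion[OF U(2,3,1)])
        (simp add: linear_sum[OF matrix_vector_mul_linear] matrix_vector_mult_scaleR)
    also have "\<dots> = (\<Sum>u\<in>U. (lam u * (u \<bullet> x)) *\<^sub>R u)"
      by (intro sum.cong refl) (simp add: eig)
    finally show ?thesis .
  qed
  have lam_nonneg: "lam u \<ge> 0" for u
    by (simp add: lam_def A_pos)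
  have "B *v (B *v x) = A *v x" for x
  proof -
    have "v \<bullet> (B *v x) = sqrt (lam v) * (v \<bullet> x)" if "v \<in> U" for v
      unfolding B using U(2,3) that by (rule inner_sum_orthonormal)
    then have "B *v (B *v x) = (\<Sum>u\<in>U. (sqrt (lam u) * sqrt (lam u) * (u \<bullet> x)) *\<^sub>R u)"
      unfolding B[of "B *v x"] by (intro sum.cong refl) (simp add: mult.assoc)
    also have "\<dots> = A *v x"
      unfolding A using lam_nonneg by simp
    finally show ?thesis .
  qed
  then have "B ** B = A"
    by (simp add: matrix_eq matrix_vector_mul_assoc[symmetric])
  moreover have "transpose B = B"
    by (simp add: B_def transpose_def vec_eq_iff mult_ac)
  moreover have "0 \<le> x \<bullet> (B *v x)" for x
    unfolding B using lam_nonneg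
    by (simp add: inner_sum_right inner_commute sum_nonneg mult.assoc)
  ultimately show ?thesis
    by (intro that) (auto simp: psd_def)
qed

lemma SUP_sqrt_set_square:
  fixes \<Sigma> :: "(real^'n^'n) set"
  assumes "\<forall>A\<in>\<Sigma>. psd A"
  shows "(SUP B\<in>sqrt_set \<Sigma>. f (B ** transpose B)) = (SUP A\<in>\<Sigma>. f A)"
proof -
  have squares: "(\<lambda>B. B ** B) ` sqrt_set \<Sigma> = \<Sigma>"
  proof
    show "\<Sigma> \<subseteq> (\<lambda>B. B ** B) ` sqrt_set \<Sigma>"
    proof
      fix A assume "A \<in> \<Sigma>"
      with assms obtain B where "psd B" "B ** B = A" using psd_square_root by blast
      with \<open>A \<in> \<Sigma>\<close> show "A \<in> (\<lambda>B. B ** B) ` sqrt_set \<Sigma>" by (auto simp: sqrt_set_def)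
    qed
  qed (auto simp: sqrt_set_def)
  have "B ** transpose B = B ** B" if "B \<in> sqrt_set \<Sigma>" for B
    using that by (simp add: sqrt_set_def psd_def)
  then have "(SUP B\<in>sqrt_set \<Sigma>. f (B ** transpose B)) = (SUP B\<in>sqrt_set \<Sigma>. f (B ** B))"
    by (intro SUP_cong) simp_all
  also have "\<dots> = (SUP A\<in>(\<lambda>B. B ** B) ` sqrt_set \<Sigma>. f A)"
    by (simp add: image_image)
  finally show ?thesis unfolding squares .
qed

lemma has_bochner_integral_lborel_prod_Basis:
  fixes h :: "'a::euclidean_space \<Rightarrow> real \<Rightarrow> real"
  assumes int: "\<And>b. b \<in> Basis \<Longrightarrow> integrable lborel (h b)"
  shows "has_bochner_integral lborel (\<lambda>x::'a. \<Prod>b\<in>Basis. h b (x \<bullet> b)) (\<Prod>b\<in>Basis. LINT t|lborel. h b t)"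
proof -
  interpret product_sigma_finite "\<lambda>_::'a. lborel :: real measure" by standard
  have [measurable]: "h b \<in> borel_measurable borel" if "b \<in> Basis" for b
    using borel_measurable_integrable[OF int[OF that]] by simp
  have g[measurable]: "(\<lambda>f. \<Sum>b\<in>Basis. f b *\<^sub>R b) 
      \<in> measurable (\<Pi>\<^sub>M b\<in>Basis. lborel) (borel :: 'a measure)"
    by measurable
  have F[measurable]: "(\<lambda>x::'a. \<Prod>b\<in>Basis. h b (x \<bullet> b)) \<in> borel_measurable borel"
    by measurable
  have coords: "(\<Prod>b\<in>Basis. h b ((\<Sum>b'\<in>Basis. f b' *\<^sub>R b') \<bullet> b)) = (\<Prod>b\<in>Basis. h b (f b))"
    for f :: "'a \<Rightarrow> real"
    by (intro prod.cong refl) (simp add: inner_sum_left inner_Basis if_distrib cong: if_cong)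
  have "integrable (\<Pi>\<^sub>M b\<in>Basis. lborel) (\<lambda>f. \<Prod>b\<in>Basis. h b (f b))"
    by (rule product_integrable_prod) (auto intro: int)
  moreover have "integral\<^sup>L (\<Pi>\<^sub>M b\<in>Basis. lborel) (\<lambda>f. \<Prod>b\<in>Basis. h b (f b))
      = (\<Prod>b\<in>Basis. LINT t|lborel. h b t)"
    by (rule product_integral_prod) (auto intro: int)
  ultimately show ?thesis
    by (subst lborel_eq) (simp add: has_bochner_integral_iff integrable_distr_eq[OF g F]
        integral_distr[OF g F] coords)
qed

lemma std_normal_density_prod_Basis:
  "std_normal_density (x :: real^'n) = (\<Prod>b\<in>Basis. normal_density 0 1 (x \<bullet> b))"
proof -
  have "(2 * pi) powr (- real CARD('n) / 2) = ((2 * pi) powr (- 1 / 2)) powr real CARD('n)"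
    by (simp add: powr_powr)
  also have "\<dots> = (1 / sqrt (2 * pi)) ^ CARD('n)"
    by (simp add: powr_realpow powr_minus_divide powr_half_sqrt)
  finally have c: "(2 * pi) powr (- real CARD('n) / 2) = (\<Prod>b\<in>(Basis :: (real^'n) set). 1 / sqrt (2 * pi))"
    by simp
  have "(norm x)\<^sup>2 = (\<Sum>b\<in>Basis. (x \<bullet> b)\<^sup>2)"
    unfolding power2_norm_eq_inner by (subst euclidean_inner) (simp add: power2_eq_square)
  then have e: "exp (- (norm x)\<^sup>2 / 2) = (\<Prod>b\<in>(Basis :: (real^'n) set). exp (- (x \<bullet> b)\<^sup>2 / 2))"
    by (simp add: exp_sum[symmetric] sum_negf sum_divide_distrib)
  show ?thesis
    unfolding std_normal_density_def c e normal_density_def prod.distrib[symmetric] by simp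
qed

lemma std_normal_second_moment:
  fixes k l :: "'n::finite"
  shows "has_bochner_integral lborel (\<lambda>x::real^'n. x$k * x$l * std_normal_density x) (if k = l then 1 else 0)"
proof -
  define m where "m b = (if b = axis k 1 then 1 else 0) + (if b = axis l 1 then 1 else (0::nat))"
    for b :: "real^'n"
  have moment: "(LINT t|lborel. normal_density 0 1 t * t ^ n) = (if n = 1 then 0 else 1)" if "n \<le> 2" for n
  proof -
    have "n = 2 * 0 \<or> n = 2 * 0 + 1 \<or> n = 2 * 1" using that by auto
    then show ?thesis
      using integral_std_normal_moment_even[of 0] integral_std_normal_moment_odd[of 0]
        integral_std_normal_moment_even[of 1] by auto
  qed
  have axes: "axis k 1 \<in> (Basis :: (real^'n) set)" "axis l 1 \<in> (Basis :: (real^'n) set)"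
    by (auto simp: Basis_vec_def)
  have "(x \<bullet> b) ^ m b = (if b = axis k 1 then x \<bullet> b else 1) * (if b = axis l 1 then x \<bullet> b else 1)"
    for x b :: "real^'n"
    by (simp add: m_def power_add)
  then have "(\<Prod>b\<in>Basis. (x \<bullet> b) ^ m b) = x$k * x$l" for x :: "real^'n"
    using axes by (simp add: prod.distrib inner_axis)
  then have "x$k * x$l * std_normal_density x = (\<Prod>b\<in>Basis. normal_density 0 1 (x \<bullet> b) * (x \<bullet> b) ^ m b)"
    for x :: "real^'n"
    by (simp add: std_normal_density_prod_Basis prod.distrib)
  moreover have "has_bochner_integral lborel (\<lambda>x::real^'n. \<Prod>b\<in>Basis. normal_density 0 1 (x \<bullet> b) * (x \<bullet> b) ^ m b)
      (\<Prod>b\<in>Basis. if m b = 1 then 0 else 1)"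
    using has_bochner_integral_lborel_prod_Basis[of "\<lambda>b t. normal_density 0 1 t * t ^ m b"]
      moment[of "m _"] integrable_std_normal_moment by (simp add: m_def)
  moreover have "(\<Prod>b\<in>(Basis :: (real^'n) set). if m b = 1 then 0 else 1) = (if k = l then 1 else (0::real))"
  proof (cases "k = l")
    case True
    then have "m b \<noteq> 1" for b by (simp add: m_def)
    with True show ?thesis by simp
  next
    case False
    then have "m (axis k 1) = 1" by (simp add: m_def axis_eq_axis)
    then have "(\<Prod>b\<in>(Basis :: (real^'n) set). if m b = 1 then 0 else 1) = (0::real)"
      using axes by (intro prod_zero) auto
    with False show ?thesis by simp
  qed
  ultimately show ?thesis by simp
qed

lemma std_normal_quadratic_form:
  fixes B :: "real^'n^'m"
  shows "has_bochner_integral lborel (\<lambda>x. (B *v x)$i * (B *v x)$j * std_normal_density x)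
    ((B ** transpose B)$i$j)"
proof -
  have "(B *v x)$i * (B *v x)$j * std_normal_density x =
      (\<Sum>k\<in>UNIV. \<Sum>l\<in>UNIV. B$i$k * B$j$l * (x$k * x$l * std_normal_density x))" for x
    unfolding matrix_vector_mult_def vec_lambda_beta sum_product
    by (simp add: sum_distrib_left sum_distrib_right mult_ac)
  moreover have "has_bochner_integral lborel
      (\<lambda>x. \<Sum>k\<in>UNIV. \<Sum>l\<in>UNIV. B$i$k * B$j$l * (x$k * x$l * std_normal_density x))
      (\<Sum>k\<in>UNIV. \<Sum>l\<in>UNIV. B$i$k * B$j$l * (if k = l then 1 else 0))"
    by (intro has_bochner_integral_sum has_bochner_integral_mult_right std_normal_second_moment)
  moreover have "(\<Sum>k\<in>UNIV. \<Sum>l\<in>UNIV. B$i$k * B$j$l * (if k = l then 1 else 0)) = (B ** transpose B)$i$j"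
    by (simp add: matrix_matrix_mult_def transpose_def if_distrib cong: if_cong)
  ultimately show ?thesis by simp
qed

lemma matrix_vector_mult_nth_bounds:
  fixes p q :: "(real^'n^'m) \<times> (real^'n)"
  shows "\<bar>(fst p *v snd p)$i\<bar> \<le> (norm p)\<^sup>2"
    and "\<bar>(fst p *v snd p)$i - (fst q *v snd q)$i\<bar> \<le> (norm p + norm q) * norm (p - q)"
proof -
  have row: "\<bar>(B *v x)$i\<bar> \<le> norm B * norm x" for B :: "real^'n^'m" and x
  proof -
    have "(B *v x)$i = B$i \<bullet> x" by (simp add: matrix_vector_mult_def inner_vec_def)
    also have "\<bar>\<dots>\<bar> \<le> norm (B$i) * norm x" by (rule Cauchy_Schwarz_ineq2)
    also have "\<dots> \<le> norm B * norm x" by (intro mult_right_mono Finite_Cartesian_Product.norm_nth_le) auto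
    finally show ?thesis .
  qed
  obtain B x B' x' where pq: "p = (B, x)" "q = (B', x')" by fastforce
  have norms: "norm B \<le> norm p" "norm x \<le> norm p" "norm B' \<le> norm q"
    "norm (B - B') \<le> norm (p - q)" "norm (x - x') \<le> norm (p - q)"
    by (simp_all add: pq norm_fst_le norm_snd_le)
  show "\<bar>(fst p *v snd p)$i\<bar> \<le> (norm p)\<^sup>2"
    using row[of B x] mult_mono[OF norms(1,2)] by (simp add: pq power2_eq_square)
  have "(B *v x)$i - (B' *v x')$i = ((B - B') *v x)$i + (B' *v (x - x'))$i"
    by (simp add: matrix_vector_mult_diff_rdistrib matrix_vector_mult_diff_distrib)
  also have "\<bar>\<dots>\<bar> \<le> norm (B - B') * norm x + norm B' * norm (x - x')"
    using row[of "B - B'" x] row[of B' "x - x'"] by linarith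
  also have "\<dots> \<le> norm (p - q) * norm p + norm q * norm (p - q)"
    using norms by (intro add_mono mult_mono) auto
  finally show "\<bar>(fst p *v snd p)$i - (fst q *v snd q)$i\<bar> \<le> (norm p + norm q) * norm (p - q)"
    by (simp add: pq algebra_simps)
qed

lemma C_lLip_matrix_vector_mult_nth_product:
  "C_lLip (\<lambda>p::(real^'n^'m) \<times> (real^'n). (fst p *v snd p)$i * (fst p *v snd p)$j)"
proof (rule C_lLipI[where C = 2 and k = 3])
  fix p q :: "(real^'n^'m) \<times> (real^'n)"
  define a b a' b' where "a = (fst p *v snd p)$i" and "b = (fst p *v snd p)$j"
    and "a' = (fst q *v snd q)$i" and "b' = (fst q *v snd q)$j"
  define P Q where "P = norm p" and "Q = norm q"
  have PQ: "P \<ge> 0" "Q \<ge> 0" by (simp_all add: P_def Q_def)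
  note bounds = matrix_vector_mult_nth_bounds(1)[where p = p, folded P_def]
    matrix_vector_mult_nth_bounds(1)[where p = q, folded Q_def]
    matrix_vector_mult_nth_bounds(2)[where p = p and q = q, folded P_def Q_def]
  have "a * b - a' * b' = a * (b - b') + b' * (a - a')" by (simp add: algebra_simps)
  then have "\<bar>a * b - a' * b'\<bar> \<le> \<bar>a\<bar> * \<bar>b - b'\<bar> + \<bar>b'\<bar> * \<bar>a - a'\<bar>"
    by (metis abs_mult abs_triangle_ineq)
  also have "\<dots> \<le> P\<^sup>2 * ((P + Q) * norm (p - q)) + Q\<^sup>2 * ((P + Q) * norm (p - q))"
    unfolding a_def b_def a'_def b'_def using bounds by (intro add_mono mult_mono) auto
  also have "\<dots> = (P\<^sup>2 + Q\<^sup>2) * (P + Q) * norm (p - q)" by (simp add: algebra_simps)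
  also have "\<dots> \<le> 2 * (1 + P ^ 3 + Q ^ 3) * norm (p - q)"
  proof (rule mult_right_mono)
    have "0 \<le> (P + Q) * (P - Q)\<^sup>2" using PQ by simp
    then show "(P\<^sup>2 + Q\<^sup>2) * (P + Q) \<le> 2 * (1 + P ^ 3 + Q ^ 3)"
      by (simp add: algebra_simps power2_eq_square power3_eq_cube)
  qed simp
  finally show "\<bar>a * b - a' * b'\<bar> \<le> 2 * (1 + norm p ^ 3 + norm q ^ 3) * norm (p - q)"
    by (simp add: P_def Q_def)
qed

theorem mainTheorem7:
  fixes H :: "('w \<Rightarrow> real) set" and E :: "('w \<Rightarrow> real) \<Rightarrow> real"
    and \<Sigma> :: "(real^'d^'d) set"
    and V :: "'w \<Rightarrow> real^'d^'d" and \<epsilon> :: "'w \<Rightarrow> real^'d"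
  assumes SE: "sublinear_expectation H E"
    and Hclosed1: "lLip_closed H TYPE(real^'d^'d)"
    and Hclosed2: "lLip_closed H TYPE(real^'d)"
    and Hclosed3: "lLip_closed H TYPE((real^'d^'d) \<times> (real^'d))"
    and Sigma_psd: "\<forall>A\<in>\<Sigma>. psd A"
    and Sigma_ne: "\<Sigma> \<noteq> {}"
    and Sigma_bdd: "bounded \<Sigma>" and Sigma_closed: "closed \<Sigma>" and Sigma_convex: "convex \<Sigma>"
    and V_rv: "random_vector H V" and eps_rv: "random_vector H \<epsilon>"
    and V_dist: "\<forall>\<phi>::real^'d^'d \<Rightarrow> real. C_lLip \<phi> \<longrightarrow>
                   E (\<lambda>w. \<phi> (V w)) = (SUP B\<in>sqrt_set \<Sigma>. \<phi> B)"
    and eps_dist: "\<forall>\<phi>::real^'d \<Rightarrow> real. C_lLip \<phi> \<longrightarrow>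
                   E (\<lambda>w. \<phi> (\<epsilon> w)) = (LINT x|lborel. \<phi> x * std_normal_density x)"
    and indep: "indep_seq E V \<epsilon>"
  shows "\<forall>i j. E (\<lambda>w. (V w *v \<epsilon> w) $ i * (V w *v \<epsilon> w) $ j) = (SUP A\<in>\<Sigma>. A $ i $ j)
            \<and> - E (\<lambda>w. - ((V w *v \<epsilon> w) $ i * (V w *v \<epsilon> w) $ j)) = (INF A\<in>\<Sigma>. A $ i $ j)
            \<and> E (\<lambda>w. ((V w *v \<epsilon> w) $ i)\<^sup>2) = (SUP A\<in>\<Sigma>. A $ i $ i)
            \<and> - E (\<lambda>w. - (((V w *v \<epsilon> w) $ i)\<^sup>2)) = (INF A\<in>\<Sigma>. A $ i $ i)"
proof -
  interpret sublinear_expectation_space H E using SE by unfold_locales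
  have "E (\<lambda>w. s * ((V w *v \<epsilon> w) $ i * (V w *v \<epsilon> w) $ j)) = (SUP A\<in>\<Sigma>. s * A $ i $ j)" for s i j
  proof -
    let ?\<phi> = "\<lambda>p. s * ((fst p *v snd p) $ i * (fst p *v snd p) $ j)"
    have "C_lLip ?\<phi>" by (intro C_lLip_const_mult C_lLip_matrix_vector_mult_nth_product)
    then have "E (\<lambda>w. ?\<phi> (V w, \<epsilon> w))
        = (SUP B\<in>sqrt_set \<Sigma>. LINT x|lborel. ?\<phi> (B, x) * std_normal_density x)"
      by (intro E_semi_G_normal_Pair Hclosed1 Hclosed2 Hclosed3 V_rv eps_rv V_dist eps_dist indep)
    also have "\<dots> = (SUP B\<in>sqrt_set \<Sigma>. s * (B ** transpose B) $ i $ j)"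
    proof (intro SUP_cong refl)
      fix B :: "real^'d^'d"
      have integrand: "(\<lambda>x. ?\<phi> (B, x) * std_normal_density x)
          = (\<lambda>x. s * ((B *v x) $ i * (B *v x) $ j * std_normal_density x))"
        by (simp add: mult_ac)
      show "(LINT x|lborel. ?\<phi> (B, x) * std_normal_density x) = s * (B ** transpose B) $ i $ j"
        unfolding integrand
        by (rule has_bochner_integral_integral_eq[OF has_bochner_integral_mult_right[OF std_normal_quadratic_form]])
    qed
    also have "\<dots> = (SUP A\<in>\<Sigma>. s * A $ i $ j)"
      using Sigma_psd by (rule SUP_sqrt_set_square)
    finally show ?thesis by simp
  qed
  from this[of 1] this[of "-1"] show ?thesis
    by (simp add: Inf_real_def image_image power2_eq_square)
qed

end
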